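(* Let $n\in\mathbb N$, $\overrightarrow{\Phi}=(\phi_1,\dots,\phi_n)$ a tuple of Orlicz functions, $\chi$ a kernel, and $w>0$. Let $K_w(f)(\mathbf x)=\sum_{\mathbf k\in\mathbb Z^n}\chi(w\mathbf x-\mathbf k)\,w^n\int_{I_{\mathbf k,w}}f(\mathbf t)\,d\mathbf t$ with $I_{\mathbf k,w}=\prod_{j=1}^n[\frac{k_j}{w},\frac{k_j+1}{w}]$. Then for every $f\in L^{\overrightarrow\Phi}(\mathbb R^n)$ and every $\lambda>0$, $$I^{\overrightarrow\Phi}(\lambda K_wf)\le\frac{\|\chi\|_1}{(m_0(\chi))^n}\,I^{\overrightarrow\Phi}\big(\lambda (m_0(\chi))^nf\big).$$
   Context: An Orlicz function is a convex, lower semicontinuous, non-decreasing $\phi:[0,\infty)\to[0,\infty]$ with $\phi(0)=0$, $\phi(u)>0$ for $u>0$, and $\lim_{u\to\infty}\phi(u)=\infty$. For measurable $f$ on $\mathbb R^n$, the modular is $I^{\overrightarrow\Phi}(f)=\int_{\mathbb R}\phi_n\Big(\cdots\int_{\mathbb R}\phi_2\Big(\int_{\mathbb R}\phi_1(|f(x_1,\dots,x_n)|)\,dx_1\Big)dx_2\cdots\Big)dx_n$. The mixed norm Orlicz space $L^{\overrightarrow\Phi}(\mathbb R^n)$ is the set of bounded measurable $f:\mathbb R^n\to\mathbb R$ with $I^{\overrightarrow\Phi}(\lambda f)<\infty$ for some $\lambda>0$. A kernel is a function $\chi:\mathbb R^n\to\mathbb R$ with $\chi\in L^1(\mathbb R^n)$,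 bounded in a neighborhood of the origin, such that $\sum_{\mathbf k\in\mathbb Z^n}\chi(\mathbf u-\mathbf k)=1$ for every $\mathbf u\in\mathbb R^n$, and for a fixed $\alpha\ge0$ the absolute moment $m_\alpha(\chi):=\sup_{\mathbf u}\sum_{\mathbf k\in\mathbb Z^n}|\chi(\mathbf u-\mathbf k)|\,\|\mathbf u-\mathbf k\|_2^\alpha$ is finite; $m_0(\chi)=\sup_{\mathbf u}\sum_{\mathbf k}|\chi(\mathbf u-\mathbf k)|$. *)

theory Defs
  imports "HOL-Analysis.Analysis"
begin

text \<open>Points of R^n are represented as extensional functions nat => real
  on the index set {..<n} (coordinate x_(j+1) is x j).  R^n carries the
  product Lebesgue (Borel) measure.\<close>

definition Rn :: "nat \<Rightarrow> (nat \<Rightarrow> real) set" where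
  "Rn n = PiE {..<n} (\<lambda>_. UNIV)"

definition Zn :: "nat \<Rightarrow> (nat \<Rightarrow> int) set" where
  "Zn n = PiE {..<n} (\<lambda>_. UNIV)"

definition lebn :: "nat \<Rightarrow> (nat \<Rightarrow> real) measure" where
  "lebn n = PiM {..<n} (\<lambda>_. lborel)"

definition vnorm :: "nat \<Rightarrow> (nat \<Rightarrow> real) \<Rightarrow> real" where
  "vnorm n u = sqrt (\<Sum>i<n. (u i)\<^sup>2)"

definition vsub :: "nat \<Rightarrow> (nat \<Rightarrow> real) \<Rightarrow> (nat \<Rightarrow> int) \<Rightarrow> (nat \<Rightarrow> real)" where
  "vsub n u k = restrict (\<lambda>i. u i - real_of_int (k i)) {..<n}"

text \<open>x^a for x >= 0, a >= 0, with the convention 0^0 = 1\<close>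
definition pw :: "real \<Rightarrow> real \<Rightarrow> real" where
  "pw x a = (if x = 0 then (if a = 0 then 1 else 0) else x powr a)"

text \<open>Orlicz function, values in [0,\<infinity>]; only its values on [0,\<infinity>) matter.\<close>
definition orlicz :: "(real \<Rightarrow> ennreal) \<Rightarrow> bool" where
  "orlicz \<phi> \<longleftrightarrow>
     \<phi> 0 = 0 \<and>
     (\<forall>u>0. \<phi> u > 0) \<and>
     mono_on {0..} \<phi> \<and>
     (\<forall>u\<ge>0. \<forall>v\<ge>0. \<forall>t\<in>{0..1}.
        \<phi> (t * u + (1 - t) * v) \<le> ennreal t * \<phi> u + ennreal (1 - t) * \<phi> v) \<and>
     (\<forall>u\<ge>0. \<phi> u \<le> Liminf (at u within {0..}) \<phi>) \<and>
     (\<phi> \<longlongrightarrow> \<infinity>) at_top"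

text \<open>Extension of an Orlicz function to [0,\<infinity>] by phi(\<infinity>) = \<infinity>
  (needed since inner integrals of the modular may be infinite).\<close>
definition phi_ext :: "(real \<Rightarrow> ennreal) \<Rightarrow> ennreal \<Rightarrow> ennreal" where
  "phi_ext \<phi> y = (if y = \<infinity> then \<infinity> else \<phi> (enn2real y))"

text \<open>Iterated modular: level j+1 integrates phi_(j+1)(level j) over coordinate x_(j+1).\<close>
fun modG :: "nat \<Rightarrow> (nat \<Rightarrow> real \<Rightarrow> ennreal) \<Rightarrow> ((nat \<Rightarrow> real) \<Rightarrow> real)
              \<Rightarrow> (nat \<Rightarrow> real) \<Rightarrow> ennreal" where
  "modG 0 \<Phi> f x = ennreal \<bar>f x\<bar>"
| "modG (Suc j) \<Phi> f x = (\<integral>\<^sup>+ t. phi_ext (\<Phi> j) (modG j \<Phi> f (x(j := t))) \<partial>lborel)"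

definition modular :: "nat \<Rightarrow> (nat \<Rightarrow> real \<Rightarrow> ennreal) \<Rightarrow> ((nat \<Rightarrow> real) \<Rightarrow> real) \<Rightarrow> ennreal" where
  "modular n \<Phi> f = modG n \<Phi> f (\<lambda>_. undefined)"

definition orlicz_space :: "nat \<Rightarrow> (nat \<Rightarrow> real \<Rightarrow> ennreal) \<Rightarrow> ((nat \<Rightarrow> real) \<Rightarrow> real) set" where
  "orlicz_space n \<Phi> = {f. f \<in> borel_measurable (lebn n) \<and>
       (\<exists>B. \<forall>x\<in>Rn n. \<bar>f x\<bar> \<le> B) \<and>
       (\<exists>lam>0. modular n \<Phi> (\<lambda>x. lam * f x) < \<infinity>)}"

definition moment :: "nat \<Rightarrow> ((nat \<Rightarrow> real) \<Rightarrow> real) \<Rightarrow> real \<Rightarrow> ennreal" where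
  "moment n chi \<alpha> = (SUP u\<in>Rn n. (\<integral>\<^sup>+ k. ennreal (\<bar>chi (vsub n u k)\<bar> * pw (vnorm n (vsub n u k)) \<alpha>)
                                   \<partial>count_space (Zn n)))"

definition sampling_kernel :: "nat \<Rightarrow> ((nat \<Rightarrow> real) \<Rightarrow> real) \<Rightarrow> real \<Rightarrow> bool" where
  "sampling_kernel n chi \<alpha> \<longleftrightarrow>
     integrable (lebn n) chi \<and>
     (\<exists>\<delta>>0. \<exists>M. \<forall>u\<in>Rn n. vnorm n u < \<delta> \<longrightarrow> \<bar>chi u\<bar> \<le> M) \<and>
     (\<forall>u\<in>Rn n. ((\<lambda>k. chi (vsub n u k)) has_sum 1) (Zn n)) \<and>
     \<alpha> \<ge> 0 \<and> moment n chi \<alpha> < \<infinity>"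

definition box :: "nat \<Rightarrow> real \<Rightarrow> (nat \<Rightarrow> int) \<Rightarrow> (nat \<Rightarrow> real) set" where
  "box n w k = PiE {..<n} (\<lambda>i. {real_of_int (k i) / w .. (real_of_int (k i) + 1) / w})"

definition kant :: "nat \<Rightarrow> ((nat \<Rightarrow> real) \<Rightarrow> real) \<Rightarrow> real \<Rightarrow> ((nat \<Rightarrow> real) \<Rightarrow> real)
                     \<Rightarrow> (nat \<Rightarrow> real) \<Rightarrow> real" where
  "kant n chi w f x = (\<Sum>\<^sub>\<infinity> k\<in>Zn n.
       chi (vsub n (\<lambda>i. w * x i) k) * w ^ n * (LINT t:box n w k|lebn n. f t))"

end

theory Submission
  imports Defs
begin

text \<open>Put \<open>M = m\<^sub>0(\<chi>)\<^sup>n\<close>.  Then \<open>\<bar>K\<^sub>w f(x)\<bar>\<close> is bounded by the integral of \<open>\<bar>M f(t)\<bar>\<close>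
  against the kernel \<open>w\<^sup>n \<bar>\<chi>(w x - \<lfloor>w t\<rfloor>)\<bar> / M\<close>, whose mass in \<open>t\<close> is at most \<open>1\<close> because
  the lattice sums of \<open>\<bar>\<chi>\<bar>\<close> are bounded by \<open>m\<^sub>0(\<chi>) \<le> M\<close>.  The modular is then estimated
  one coordinate at a time.  At level \<open>j\<close>, Jensen's inequality for \<open>\<phi>\<^sub>j\<close> with respect to the
  sub-probability kernel moves \<open>\<phi>\<^sub>j\<close> under the \<open>t\<close>-integral, Tonelli exchanges the
  \<open>x\<^sub>j\<close>- and \<open>t\<close>-integrals, and integrating the kernel in \<open>x\<^sub>j\<close> integrates \<open>\<chi>\<close> in one more
  variable.  The new kernel no longer depends on \<open>t\<^sub>j\<close>, so the \<open>t\<^sub>j\<close>-integral builds the next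
  level of the modular of \<open>M f\<close>; its mass is an average of masses of the previous level, hence
  still at most \<open>1\<close>.  After \<open>n\<close> levels the kernel is the constant \<open>\<parallel>\<chi>\<parallel>\<^sub>1 / M\<close>.\<close>

section \<open>Orlicz functions and Jensen's inequality\<close>

lemma borel_measurable_mono_complete_linorder:
  fixes g :: "'a::{complete_linorder, linorder_topology} \<Rightarrow> 'b::{linorder_topology, second_countable_topology}"
  assumes "mono g"
  shows "g \<in> borel_measurable borel"
proof (rule borel_measurableI_greater)
  fix y
  define U where "U = {x. y < g x}"
  have up: "b \<in> U" if "a \<in> U" "a \<le> b" for a b
    using that monoD[OF assms] by (auto simp: U_def intro: less_le_trans)
  have "U = {Inf U..} \<or> U = {Inf U<..}"
  proof (cases "Inf U \<in> U")
    case True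
    then have "U = {Inf U..}" by (auto intro: up Inf_lower)
    then show ?thesis ..
  next
    case False
    have "U = {Inf U<..}"
    proof (intro set_eqI iffI)
      fix x assume "x \<in> U"
      then show "x \<in> {Inf U<..}" using False Inf_lower[of x U] by (cases "x = Inf U") auto
    next
      fix x assume "x \<in> {Inf U<..}"
      then obtain a where "a \<in> U" "a < x" by (auto simp: Inf_less_iff)
      then show "x \<in> U" by (auto intro: up)
    qed
    then show ?thesis ..
  qed
  then have "U \<in> sets borel" by (metis atLeast_borel greaterThan_borel)
  then show "{x \<in> space borel. y < g x} \<in> sets borel" by (simp add: U_def)
qed

lemma orlicz_mono: "orlicz \<phi> \<Longrightarrow> 0 \<le> x \<Longrightarrow> x \<le> y \<Longrightarrow> \<phi> x \<le> \<phi> y"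
  unfolding orlicz_def mono_on_def by auto

lemma orlicz_convex: "orlicz \<phi> \<Longrightarrow> 0 \<le> u \<Longrightarrow> 0 \<le> v \<Longrightarrow> 0 \<le> t \<Longrightarrow> t \<le> 1 \<Longrightarrow>
   \<phi> (t * u + (1 - t) * v) \<le> ennreal t * \<phi> u + ennreal (1 - t) * \<phi> v"
  unfolding orlicz_def by auto

lemma mono_phi_ext: "orlicz \<phi> \<Longrightarrow> mono (phi_ext \<phi>)"
  unfolding mono_def phi_ext_def
  by (auto intro!: orlicz_mono enn2real_mono simp: top_unique less_top)

lemma borel_measurable_phi_ext[measurable]: "orlicz \<phi> \<Longrightarrow> phi_ext \<phi> \<in> borel_measurable borel"
  by (rule borel_measurable_mono_complete_linorder[OF mono_phi_ext])

lemma phi_ext_zero[simp]: "orlicz \<phi> \<Longrightarrow> phi_ext \<phi> 0 = 0"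
  unfolding phi_ext_def orlicz_def by simp

lemma phi_ext_top[simp]: "phi_ext \<phi> top = top"
  unfolding phi_ext_def by simp

lemma phi_ext_ennreal[simp]: "0 \<le> r \<Longrightarrow> phi_ext \<phi> (ennreal r) = \<phi> r"
  unfolding phi_ext_def by simp

lemma convex_on_orlicz_finite_part:
  assumes phi: "orlicz \<phi>" and fin: "\<phi> b < \<infinity>"
  shows "convex_on {0..b} (\<lambda>y. enn2real (\<phi> y))"
proof (rule convex_onI)
  show "convex {0..b}" by simp
  fix t x y :: real assume t: "0 < t" "t < 1" and xy: "x \<in> {0..b}" "y \<in> {0..b}"
  have fx: "\<phi> x < \<infinity>" and fy: "\<phi> y < \<infinity>"
    using orlicz_mono[OF phi, of x b] orlicz_mono[OF phi, of y b] xy fin by auto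
  have "\<phi> ((1 - t) * x + (1 - (1 - t)) * y) \<le> ennreal (1 - t) * \<phi> x + ennreal (1 - (1 - t)) * \<phi> y"
    by (rule orlicz_convex[OF phi]) (use t xy in auto)
  then have "enn2real (\<phi> ((1 - t) * x + t * y)) \<le> enn2real (ennreal (1 - t) * \<phi> x + ennreal t * \<phi> y)"
    using fx fy by (intro enn2real_mono) (auto simp: ennreal_mult_less_top)
  also have "\<dots> = (1 - t) * enn2real (\<phi> x) + t * enn2real (\<phi> y)"
    using fx fy t by (simp add: enn2real_plus ennreal_mult_less_top enn2real_mult)
  finally show "enn2real (\<phi> ((1 - t) *\<^sub>R x + t *\<^sub>R y)) \<le> (1 - t) * enn2real (\<phi> x) + t * enn2real (\<phi> y)"
    by simp
qed

lemma orlicz_supporting_line: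
  assumes phi: "orlicz \<phi>" and z: "0 < z" "z < y1" and fin: "\<phi> y1 < \<infinity>"
  obtains c where "0 \<le> c" "enn2real (\<phi> z) \<le> c * z"
    "\<And>y. 0 \<le> y \<Longrightarrow> \<phi> y < \<infinity> \<Longrightarrow> enn2real (\<phi> z) + c * (y - z) \<le> enn2real (\<phi> y)"
proof -
  define g where "g y = enn2real (\<phi> y)" for y
  define c where "c = Inf ((\<lambda>t. (g z - g t) / (z - t)) ` ({z<..} \<inter> {0..y1}))"
  have below_y1: "g z + c * (y - z) \<le> g y" if "0 \<le> y" "y \<le> y1" for y
    using convex_le_Inf_differential[OF convex_on_orlicz_finite_part[OF phi fin], of z y] z that
    unfolding c_def g_def by auto
  have "g 0 = 0" using phi by (simp add: g_def orlicz_def)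
  then have gz: "g z \<le> c * z" using below_y1[of 0] z by simp
  moreover have "0 \<le> g z" by (simp add: g_def)
  ultimately have "0 \<le> c * z" by linarith
  then have "0 \<le> c" using z by (simp add: zero_le_mult_iff)
  moreover have "g z + c * (y - z) \<le> g y" if y: "0 \<le> y" and fy: "\<phi> y < \<infinity>" for y
  proof (cases "y \<le> y1")
    case True then show ?thesis using below_y1 y by auto
  next
    case False
    have "c * (y1 - z) \<le> g y1 - g z" using below_y1[of y1] z by simp
    then have "c \<le> (g y1 - g z) / (y1 - z)" using z by (simp add: pos_le_divide_eq)
    also have "\<dots> = (g z - g y1) / (z - y1)" by (metis minus_diff_eq minus_divide_divide)
    \<comment> \<open>beyond \<open>y1\<close> the chord slopes from \<open>z\<close> only increase\<close>
    also have "\<dots> \<le> (g z - g y) / (z - y)"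
      using convex_on_slope_le(1)[OF convex_on_orlicz_finite_part[OF phi fy], of z y y1] z False
      unfolding g_def by simp
    also have "\<dots> = (g y - g z) / (y - z)" by (metis minus_diff_eq minus_divide_divide)
    finally have "c * (y - z) \<le> g y - g z" using False z by (simp add: pos_le_divide_eq)
    then show ?thesis by simp
  qed
  ultimately show ?thesis using that gz unfolding g_def by blast
qed

lemma orlicz_jensen_at_supported_point:
  assumes phi: "orlicz \<phi>" and [measurable]: "\<psi> \<in> borel_measurable M" "K \<in> borel_measurable M"
    and mass: "(\<integral>\<^sup>+x. K x \<partial>M) \<le> 1"
    and z: "0 < z" "z < y1" "\<phi> y1 < \<infinity>" "ennreal z \<le> (\<integral>\<^sup>+x. \<psi> x * K x \<partial>M)"
  shows "\<phi> z \<le> (\<integral>\<^sup>+x. phi_ext \<phi> (\<psi> x) * K x \<partial>M)"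
proof -
  define R where "R = (\<integral>\<^sup>+x. phi_ext \<phi> (\<psi> x) * K x \<partial>M)"
  define y0 where "y0 = (\<integral>\<^sup>+x. \<psi> x * K x \<partial>M)"
  define \<mu> where "\<mu> = (\<integral>\<^sup>+x. K x \<partial>M)"
  have [measurable]: "phi_ext \<phi> \<in> borel_measurable borel" using phi by simp
  obtain m where m: "\<mu> = ennreal m" "0 \<le> m" "m \<le> 1"
    using mass unfolding \<mu>_def by (metis ennreal_cases ennreal_le_1 ennreal_top_neq_one top.extremum_unique)
  obtain c where c: "0 \<le> c" "enn2real (\<phi> z) \<le> c * z"
    "\<And>y. 0 \<le> y \<Longrightarrow> \<phi> y < \<infinity> \<Longrightarrow> enn2real (\<phi> z) + c * (y - z) \<le> enn2real (\<phi> y)"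
    using orlicz_supporting_line[OF phi z(1-3)] by blast
  define a where "a = enn2real (\<phi> z)"
  have "\<phi> z < \<infinity>" using orlicz_mono[OF phi, of z y1] z by auto
  then have phiz: "\<phi> z = ennreal a" by (simp add: a_def less_top)
  have line: "ennreal a + ennreal c * y \<le> phi_ext \<phi> y + ennreal (c * z)" for y
  proof (cases y)
    case (real r)
    show ?thesis
    proof (cases "\<phi> r < \<infinity>")
      case True
      then have "a + c * r \<le> enn2real (\<phi> r) + c * z" using c(3)[of r] real by (simp add: a_def algebra_simps)
      then have "ennreal (a + c * r) \<le> ennreal (enn2real (\<phi> r) + c * z)" by (rule ennreal_leI)
      then show ?thesis using real True c(1) z
        by (simp add: a_def ennreal_plus ennreal_mult less_top)
    qed (use real in \<open>simp add: less_top[symmetric]\<close>)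
  qed simp
  have "ennreal a * \<mu> + ennreal c * y0 = (\<integral>\<^sup>+x. (ennreal a + ennreal c * \<psi> x) * K x \<partial>M)"
    unfolding y0_def \<mu>_def distrib_right by (simp add: nn_integral_add nn_integral_cmult mult.assoc)
  also have "\<dots> \<le> (\<integral>\<^sup>+x. (phi_ext \<phi> (\<psi> x) + ennreal (c * z)) * K x \<partial>M)"
    by (intro nn_integral_mono mult_right_mono line) simp
  also have "\<dots> = R + ennreal (c * z) * \<mu>"
    unfolding R_def \<mu>_def distrib_right by (simp add: nn_integral_add nn_integral_cmult)
  finally have integrated: "ennreal a * \<mu> + ennreal c * y0 \<le> R + ennreal (c * z) * \<mu>" .
  \<comment> \<open>the missing mass \<open>1 - \<mu>\<close> is paid for by \<open>\<phi> z \<le> c z\<close>\<close>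
  have "a * (1 - m) \<le> c * z * (1 - m)" using c(2) m by (intro mult_right_mono) (auto simp: a_def)
  then have "a + c * z * m \<le> a * m + c * z" by (simp add: algebra_simps)
  then have "ennreal a + ennreal (c * z) * \<mu> \<le> ennreal a * \<mu> + ennreal (c * z)"
    using m c(1) z by (simp add: ennreal_plus[symmetric] ennreal_mult[symmetric] a_def del: ennreal_plus)
  also have "ennreal (c * z) \<le> ennreal c * y0"
    using z c(1) by (simp add: ennreal_mult y0_def mult_left_mono)
  also have "ennreal a * \<mu> + ennreal c * y0 \<le> R + ennreal (c * z) * \<mu>" by (rule integrated)
  finally have "ennreal (c * z) * \<mu> + ennreal a \<le> ennreal (c * z) * \<mu> + R" by (simp add: add.commute)
  then show ?thesis using m by (simp add: ennreal_add_left_cancel_le phiz R_def ennreal_mult_eq_top_iff)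
qed

lemma orlicz_mean_le_of_infinite_beyond:
  assumes phi: "orlicz \<phi>" and [measurable]: "\<psi> \<in> borel_measurable M" "K \<in> borel_measurable M"
    and mass: "(\<integral>\<^sup>+x. K x \<partial>M) \<le> 1"
    and z: "0 \<le> z" and phi_top: "\<And>y. z < y \<Longrightarrow> \<phi> y = \<infinity>"
    and fin: "(\<integral>\<^sup>+x. phi_ext \<phi> (\<psi> x) * K x \<partial>M) \<noteq> \<infinity>"
  shows "(\<integral>\<^sup>+x. \<psi> x * K x \<partial>M) \<le> ennreal z"
proof -
  have "AE x in M. phi_ext \<phi> (\<psi> x) * K x \<noteq> \<infinity>"
    using nn_integral_PInf_AE[of "\<lambda>x. phi_ext \<phi> (\<psi> x) * K x" M] phi fin by simp
  moreover have "\<psi> x * K x \<le> ennreal z * K x" if fin: "phi_ext \<phi> (\<psi> x) * K x \<noteq> \<infinity>" for x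
  proof (cases "K x = 0")
    case False
    then have "phi_ext \<phi> (\<psi> x) \<noteq> \<infinity>" using fin by (auto simp: ennreal_mult_eq_top_iff)
    then obtain r where "\<psi> x = ennreal r" "0 \<le> r" "\<phi> r \<noteq> \<infinity>"
      by (cases "\<psi> x") auto
    moreover from this have "r \<le> z" using phi_top[of r] by (meson not_le)
    ultimately show ?thesis by (intro mult_right_mono) auto
  qed simp
  ultimately have "AE x in M. \<psi> x * K x \<le> ennreal z * K x" by (auto elim: AE_mp)
  then have "(\<integral>\<^sup>+x. \<psi> x * K x \<partial>M) \<le> ennreal z * (\<integral>\<^sup>+x. K x \<partial>M)"
    by (simp add: nn_integral_mono_AE flip: nn_integral_cmult)
  also have "\<dots> \<le> ennreal z" using mass by (metis mult.right_neutral mult_left_mono zero_le)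
  finally show ?thesis .
qed

lemma orlicz_jensen_below_mean:
  assumes phi: "orlicz \<phi>" and [measurable]: "\<psi> \<in> borel_measurable M" "K \<in> borel_measurable M"
    and mass: "(\<integral>\<^sup>+x. K x \<partial>M) \<le> 1"
    and z: "0 < z" "ennreal z < (\<integral>\<^sup>+x. \<psi> x * K x \<partial>M)"
  shows "\<phi> z \<le> (\<integral>\<^sup>+x. phi_ext \<phi> (\<psi> x) * K x \<partial>M)"
proof (cases "\<exists>y1>z. \<phi> y1 < \<infinity>")
  case True
  then show ?thesis using orlicz_jensen_at_supported_point[OF phi assms(2,3) mass z(1)] z(2) by auto
next
  case False
  then have phi_top: "\<phi> y = \<infinity>" if "z < y" for y
    using that by (force simp: not_less top_unique)
  show ?thesis
  proof (rule ccontr)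
    assume "\<not> ?thesis"
    then have "(\<integral>\<^sup>+x. phi_ext \<phi> (\<psi> x) * K x \<partial>M) \<noteq> \<infinity>" by auto
    with z(1) have "(\<integral>\<^sup>+x. \<psi> x * K x \<partial>M) \<le> ennreal z"
      by (intro orlicz_mean_le_of_infinite_beyond[OF phi assms(2,3) mass _ phi_top]) auto
    then show False using z(2) by simp
  qed
qed

lemma orlicz_jensen:
  assumes phi: "orlicz \<phi>" and [measurable]: "\<psi> \<in> borel_measurable M" "K \<in> borel_measurable M"
    and mass: "(\<integral>\<^sup>+x. K x \<partial>M) \<le> 1"
  shows "phi_ext \<phi> (\<integral>\<^sup>+x. \<psi> x * K x \<partial>M) \<le> (\<integral>\<^sup>+x. phi_ext \<phi> (\<psi> x) * K x \<partial>M)"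
proof -
  define R where "R = (\<integral>\<^sup>+x. phi_ext \<phi> (\<psi> x) * K x \<partial>M)"
  define y0 where "y0 = (\<integral>\<^sup>+x. \<psi> x * K x \<partial>M)"
  have below: "\<phi> z \<le> R" if "0 < z" "ennreal z < y0" for z
    using orlicz_jensen_below_mean[OF phi assms(2,3) mass that(1)] that(2) by (simp add: R_def y0_def)
  show ?thesis
  proof (cases y0)
    case (real r)
    show ?thesis
    proof (cases "r = 0")
      case True then show ?thesis using real phi by (simp add: y0_def[symmetric])
    next
      case False
      with real have r: "0 < r" by simp
      \<comment> \<open>\<open>\<phi> z \<le> R\<close> is known only for \<open>z < r\<close>: use lower semicontinuity from the left\<close>
      have "\<phi> r \<le> Liminf (at r within {0..}) \<phi>" using phi r by (simp add: orlicz_def)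
      also have "\<dots> \<le> Liminf (at_left r) \<phi>"
      proof -
        have "at_left r \<le> at r within {0..}"
          using r at_le[of "{0..r}" "{0..}" r] by (simp add: at_within_Icc_at_left)
        then show ?thesis unfolding le_Liminf_iff by (blast intro: filter_leD less_LiminfD)
      qed
      also have "\<dots> \<le> R"
      proof (rule Liminf_le)
        show "eventually (\<lambda>z. \<phi> z \<le> R) (at_left r)"
          using eventually_at_left_real[OF r] by eventually_elim (auto intro!: below simp: real ennreal_lessI)
      qed simp
      finally show ?thesis using real by (simp add: y0_def[symmetric] R_def[symmetric])
    qed
  next
    case top
    have "(\<phi> \<longlongrightarrow> \<infinity>) at_top" using phi by (simp add: orlicz_def)
    moreover have "eventually (\<lambda>z. \<phi> z \<le> R) at_top"
      using eventually_gt_at_top[of 0] by eventually_elim (auto intro!: below simp: top)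
    ultimately have "\<infinity> \<le> R" by (rule tendsto_upperbound) simp
    then show ?thesis by (simp add: R_def top_unique)
  qed
qed

section \<open>Lattice decompositions of integrals\<close>

lemma nn_integral_floor_scaled:
  fixes g :: "int \<Rightarrow> ennreal"
  assumes w: "0 < w"
  shows "(\<integral>\<^sup>+\<tau>. g \<lfloor>w * \<tau>\<rfloor> \<partial>lborel) = ennreal (1/w) * (\<integral>\<^sup>+k. g k \<partial>count_space UNIV)"
proof -
  define I where "I k = {real_of_int k / w ..< (real_of_int k + 1) / w}" for k
  have "indicator (I k) \<tau> = (indicator {\<lfloor>w * \<tau>\<rfloor>} k :: ennreal)" for k \<tau>
  proof -
    have "\<tau> \<in> I k \<longleftrightarrow> real_of_int k \<le> w * \<tau> \<and> w * \<tau> < real_of_int k + 1"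
      using w by (simp add: I_def field_simps)
    also have "\<dots> \<longleftrightarrow> \<lfloor>w * \<tau>\<rfloor> = k" by linarith
    finally show ?thesis by (auto simp: indicator_def)
  qed
  then have "(\<integral>\<^sup>+\<tau>. g \<lfloor>w * \<tau>\<rfloor> \<partial>lborel) = (\<integral>\<^sup>+\<tau>. (\<integral>\<^sup>+k. g k * indicator (I k) \<tau> \<partial>count_space UNIV) \<partial>lborel)"
    by simp
  also have "\<dots> = (\<integral>\<^sup>+k. (\<integral>\<^sup>+\<tau>. g k * indicator (I k) \<tau> \<partial>lborel) \<partial>count_space UNIV)"
    by (rule nn_integral_count_space_nn_integral) (auto simp: I_def)
  also have "\<dots> = (\<integral>\<^sup>+k. ennreal (1/w) * g k \<partial>count_space UNIV)"
  proof (rule nn_integral_cong)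
    fix k :: int
    have "(real_of_int k + 1) / w - real_of_int k / w = 1 / w" using w by (simp add: field_simps)
    moreover have "real_of_int k / w \<le> (real_of_int k + 1) / w" using w by (simp add: divide_right_mono)
    ultimately show "(\<integral>\<^sup>+\<tau>. g k * indicator (I k) \<tau> \<partial>lborel) = ennreal (1/w) * g k"
      by (simp add: I_def nn_integral_cmult_indicator mult.commute)
  qed
  finally show ?thesis by (simp add: nn_integral_cmult)
qed

lemma nn_integral_lborel_periodize:
  fixes H :: "real \<Rightarrow> ennreal"
  assumes [measurable]: "H \<in> borel_measurable borel"
  shows "(\<integral>\<^sup>+\<sigma>. H \<sigma> \<partial>lborel)
       = (\<integral>\<^sup>+\<sigma>. (\<integral>\<^sup>+k. H (\<sigma> - real_of_int k) \<partial>count_space UNIV) * indicator {0..<1} \<sigma> \<partial>lborel)"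
proof -
  define I where "I k = {- real_of_int k ..< 1 - real_of_int k}" for k :: int
  have "indicator (I k) u = (indicator {- \<lfloor>u\<rfloor>} k :: ennreal)" for k u
  proof -
    have "u \<in> I k \<longleftrightarrow> \<lfloor>u\<rfloor> = - k" unfolding I_def atLeastLessThan_iff by linarith
    then show ?thesis by (auto simp: indicator_def)
  qed
  then have "(\<integral>\<^sup>+u. H u \<partial>lborel) = (\<integral>\<^sup>+u. (\<integral>\<^sup>+k. H u * indicator (I k) u \<partial>count_space UNIV) \<partial>lborel)"
    by simp
  also have "\<dots> = (\<integral>\<^sup>+k. (\<integral>\<^sup>+u. H u * indicator (I k) u \<partial>lborel) \<partial>count_space UNIV)"
    by (rule nn_integral_count_space_nn_integral) (auto simp: I_def)
  also have "\<dots> = (\<integral>\<^sup>+k. (\<integral>\<^sup>+\<sigma>. H (\<sigma> - real_of_int k) * indicator {0..<1} \<sigma> \<partial>lborel) \<partial>count_space UNIV)"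
  proof (rule nn_integral_cong)
    fix k :: int
    have "(\<integral>\<^sup>+u. H u * indicator (I k) u \<partial>lborel)
        = ennreal \<bar>1\<bar> * (\<integral>\<^sup>+\<sigma>. H (- real_of_int k + 1 * \<sigma>) * indicator (I k) (- real_of_int k + 1 * \<sigma>) \<partial>lborel)"
      by (rule nn_integral_real_affine) (auto simp: I_def)
    also have "(\<lambda>\<sigma>. H (- real_of_int k + 1 * \<sigma>) * indicator (I k) (- real_of_int k + 1 * \<sigma>))
             = (\<lambda>\<sigma>. H (\<sigma> - real_of_int k) * indicator {0..<1} \<sigma>)"
      by (auto simp: I_def indicator_def fun_eq_iff)
    finally show "(\<integral>\<^sup>+u. H u * indicator (I k) u \<partial>lborel)
        = (\<integral>\<^sup>+\<sigma>. H (\<sigma> - real_of_int k) * indicator {0..<1} \<sigma> \<partial>lborel)" by simp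
  qed
  also have "\<dots> = (\<integral>\<^sup>+\<sigma>. (\<integral>\<^sup>+k. H (\<sigma> - real_of_int k) * indicator {0..<1} \<sigma> \<partial>count_space UNIV) \<partial>lborel)"
    by (rule nn_integral_count_space_nn_integral[symmetric]) auto
  finally show ?thesis by (simp add: nn_integral_multc)
qed

lemma abs_infsum_le_nn_integral:
  fixes a :: "'k \<Rightarrow> real"
  shows "ennreal \<bar>infsum a A\<bar> \<le> (\<integral>\<^sup>+k. ennreal \<bar>a k\<bar> \<partial>count_space A)"
proof (cases "a summable_on A")
  case True
  then have abs: "(\<lambda>k. norm (a k)) summable_on A" using summable_on_iff_abs_summable_on_real by blast
  then have abs': "Infinite_Set_Sum.abs_summable_on (\<lambda>k. \<bar>a k\<bar>) A"
    using abs_summable_equivalent[of "\<lambda>k. \<bar>a k\<bar>" A] by simp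
  have "\<bar>infsum a A\<bar> \<le> infsum (\<lambda>k. norm (a k)) A" using norm_infsum_bound[OF abs] by simp
  also have "\<dots> = infsetsum (\<lambda>k. \<bar>a k\<bar>) A" using infsetsum_infsum[OF abs'] by simp
  finally have "ennreal \<bar>infsum a A\<bar> \<le> ennreal (infsetsum (\<lambda>k. \<bar>a k\<bar>) A)" by (rule ennreal_leI)
  also have "\<dots> = (\<integral>\<^sup>+k. ennreal \<bar>a k\<bar> \<partial>count_space A)"
    by (rule nn_integral_conv_infsetsum[OF abs', symmetric]) simp
  finally show ?thesis .
qed (simp add: infsum_not_exists)

lemma abs_set_lebesgue_integral_le_nn_integral:
  fixes f :: "'a \<Rightarrow> real"
  shows "ennreal \<bar>LINT t:B|M. f t\<bar> \<le> (\<integral>\<^sup>+t. ennreal \<bar>f t\<bar> * indicator B t \<partial>M)"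
proof (cases "integrable M (\<lambda>t. indicator B t *\<^sub>R f t)")
  case True
  have "ennreal \<bar>LINT t:B|M. f t\<bar> = ennreal (norm (integral\<^sup>L M (\<lambda>t. indicator B t *\<^sub>R f t)))"
    by (simp add: set_lebesgue_integral_def)
  also have "\<dots> \<le> (\<integral>\<^sup>+t. ennreal (norm (indicator B t *\<^sub>R f t)) \<partial>M)"
    by (rule integral_norm_bound_ennreal[OF True])
  also have "\<dots> = (\<integral>\<^sup>+t. ennreal \<bar>f t\<bar> * indicator B t \<partial>M)"
    by (intro nn_integral_cong) (simp add: indicator_def)
  finally show ?thesis .
qed (simp add: set_lebesgue_integral_def not_integrable_integral_eq)

lemma product_sigma_finite_lborel: "product_sigma_finite (\<lambda>_::nat. lborel :: real measure)"
  by (simp add: product_sigma_finite_def sigma_finite_lborel)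

lemma AE_lebn_coordinate_neq:
  assumes "i < n"
  shows "AE t in lebn n. t i \<noteq> c"
proof (rule AE_I')
  define N where "N = PiE {..<n} (\<lambda>l. if l = i then {c} else (UNIV :: real set))"
  have "emeasure (lebn n) N = (\<Prod>l<n. emeasure lborel (if l = i then {c} else (UNIV :: real set)))"
    unfolding N_def lebn_def by (rule product_sigma_finite.emeasure_PiM[OF product_sigma_finite_lborel]) auto
  also have "\<dots> = 0" using assms by (intro prod_zero) auto
  finally show "N \<in> null_sets (lebn n)"
    unfolding N_def lebn_def by (auto intro: sets_PiM_I_finite)
  show "{t \<in> space (lebn n). \<not> t i \<noteq> c} \<subseteq> N"
    by (auto simp: N_def lebn_def space_PiM PiE_iff extensional_def)
qed

section \<open>The kernels of the coordinatewise Jensen argument\<close>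

lemma atLeastLessThan_eq_insert_lower: "j < n \<Longrightarrow> {j..<n} = insert j {Suc j..<(n::nat)}"
  by auto

lemma borel_measurable_modG:
  assumes phis: "\<forall>i<n. orlicz (\<Phi> i)" and [measurable]: "F \<in> borel_measurable (lebn n)"
  shows "j \<le> n \<Longrightarrow> modG j \<Phi> F \<in> borel_measurable (PiM {j..<n} (\<lambda>_. lborel))"
proof (induction j)
  case 0
  have "(\<lambda>t. ennreal \<bar>F t\<bar>) \<in> borel_measurable (lebn n)" by measurable
  then show ?case by (simp add: lebn_def atLeast0LessThan)
next
  case (Suc j)
  then have "modG j \<Phi> F \<in> borel_measurable (PiM (insert j {Suc j..<n}) (\<lambda>_. lborel))"
    by (simp add: atLeastLessThan_eq_insert_lower)
  then have "(\<lambda>(v, u). modG j \<Phi> F (v(j := u))) \<in> borel_measurable (PiM {Suc j..<n} (\<lambda>_. lborel) \<Otimes>\<^sub>M lborel)"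
    using measurable_comp[OF measurable_add_dim] by (simp add: comp_def case_prod_beta)
  moreover have "phi_ext (\<Phi> j) \<in> borel_measurable borel" using phis Suc.prems by simp
  ultimately have "(\<lambda>(v, u). phi_ext (\<Phi> j) (modG j \<Phi> F (v(j := u))))
      \<in> borel_measurable (PiM {Suc j..<n} (\<lambda>_. lborel) \<Otimes>\<^sub>M lborel)"
    by (simp add: case_prod_beta)
  then show ?case by (simp add: lborel.borel_measurable_nn_integral)
qed

locale kantorovich_kernel =
  fixes n :: nat and chi :: "(nat \<Rightarrow> real) \<Rightarrow> real" and w M :: real
  assumes w_pos: "0 < w" and M_pos: "0 < M"
    and integrable_chi: "integrable (lebn n) chi"
    and sum_abs_chi_le: "\<And>u. (\<integral>\<^sup>+k. ennreal \<bar>chi (vsub n u k)\<bar> \<partial>count_space (Zn n)) \<le> ennreal M"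
begin

lemma borel_measurable_chi[measurable]: "chi \<in> borel_measurable (lebn n)"
  using integrable_chi by (rule borel_measurable_integrable)

abbreviation lebn_from :: "nat \<Rightarrow> (nat \<Rightarrow> real) measure" where
  "lebn_from j \<equiv> PiM {j..<n} (\<lambda>_. lborel)"

lemma sigma_finite_lebn_from: "sigma_finite_measure (lebn_from j)"
  by (rule product_sigma_finite.sigma_finite[OF product_sigma_finite_lborel]) simp

primrec chi_marginal :: "nat \<Rightarrow> (nat \<Rightarrow> real) \<Rightarrow> ennreal" where
  "chi_marginal 0 v = ennreal (\<bar>chi (restrict v {..<n})\<bar> / M)"
| "chi_marginal (Suc j) v = (\<integral>\<^sup>+u. chi_marginal j (v(j := u)) \<partial>lborel)"

text \<open>The kernel of level \<open>j\<close>, a density in the variables \<open>t j, \<dots>, t (n - 1)\<close>.  Level \<open>0\<close>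
  dominates the operator \<open>K\<^sub>w\<close>; each step to level \<open>j + 1\<close> integrates out one coordinate of
  \<open>x\<close> in the modular and, by Jensen's inequality, one coordinate of \<open>t\<close> in the kernel.\<close>

definition level_kernel :: "nat \<Rightarrow> (nat \<Rightarrow> real) \<Rightarrow> (nat \<Rightarrow> real) \<Rightarrow> ennreal" where
  "level_kernel j x t = ennreal (w ^ (n - j)) * chi_marginal j (\<lambda>i. w * x i - of_int \<lfloor>w * t i\<rfloor>)"

lemma ennreal_power_w_Suc: "j < n \<Longrightarrow> ennreal (w ^ (n - j)) = ennreal w * ennreal (w ^ (n - Suc j))"
  using w_pos by (simp add: ennreal_mult[symmetric] Suc_diff_Suc[symmetric] del: ennreal_mult')

lemma chi_marginal_cong: "(\<And>i. j \<le> i \<Longrightarrow> i < n \<Longrightarrow> v i = v' i) \<Longrightarrow> chi_marginal j v = chi_marginal j v'"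
proof (induction j arbitrary: v v')
  case 0
  then have "restrict v {..<n} = restrict v' {..<n}" by (auto simp: restrict_def)
  then show ?case by simp
next
  case (Suc j)
  then have "chi_marginal j (v(j := u)) = chi_marginal j (v'(j := u))" for u
    by (intro Suc.IH) auto
  then show ?case by simp
qed

lemma borel_measurable_chi_marginal: "j \<le> n \<Longrightarrow> chi_marginal j \<in> borel_measurable (lebn_from j)"
proof (induction j)
  case 0
  have "(\<lambda>v. ennreal (\<bar>chi v\<bar> / M)) \<in> borel_measurable (lebn_from 0)"
    by (simp add: lebn_def[symmetric] atLeast0LessThan)
  then show ?case
  proof (rule measurable_cong[THEN iffD1, rotated])
    fix v assume "v \<in> space (lebn_from 0)"
    then have "restrict v {..<n} = v" by (auto simp: space_PiM PiE_def extensional_def)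
    then show "ennreal (\<bar>chi v\<bar> / M) = chi_marginal 0 v" by simp
  qed
next
  case (Suc j)
  then have "chi_marginal j \<in> borel_measurable (PiM (insert j {Suc j..<n}) (\<lambda>_. lborel))"
    by (simp add: atLeastLessThan_eq_insert_lower)
  then have "(\<lambda>(v, u). chi_marginal j (v(j := u))) \<in> borel_measurable (lebn_from (Suc j) \<Otimes>\<^sub>M lborel)"
    using measurable_comp[OF measurable_add_dim] by (simp add: comp_def case_prod_beta)
  then show ?case by (simp add: lborel.borel_measurable_nn_integral)
qed

lemma measurable_chi_marginal_comp:
  assumes "j \<le> n" and "(\<lambda>z. restrict (G z) {j..<n}) \<in> measurable N (lebn_from j)"
  shows "(\<lambda>z. chi_marginal j (G z)) \<in> borel_measurable N"
proof -
  have "(\<lambda>z. chi_marginal j (restrict (G z) {j..<n})) \<in> borel_measurable N"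
    using measurable_comp[OF assms(2) borel_measurable_chi_marginal[OF assms(1)]] by (simp add: comp_def)
  moreover have "chi_marginal j (restrict (G z) {j..<n}) = chi_marginal j (G z)" for z
    by (rule chi_marginal_cong) auto
  ultimately show ?thesis by simp
qed

lemma borel_measurable_level_kernel: "j \<le> n \<Longrightarrow> i \<le> j \<Longrightarrow> level_kernel j x \<in> borel_measurable (lebn_from i)"
  unfolding level_kernel_def
  by (intro borel_measurable_times_ennreal borel_measurable_const measurable_chi_marginal_comp measurable_restrict)
     (auto intro!: measurable_component_singleton)

lemma borel_measurable_level_kernel_update:
  "j \<le> n \<Longrightarrow> (\<lambda>(s, t). level_kernel j (x(j := s)) t) \<in> borel_measurable (lborel \<Otimes>\<^sub>M lebn_from j)"
  unfolding level_kernel_def case_prod_beta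
  by (intro borel_measurable_times_ennreal borel_measurable_const measurable_chi_marginal_comp measurable_restrict)
     (auto simp: measurable_lborel2)

lemma nn_integral_level_kernel_update:
  assumes j: "j < n"
  shows "(\<integral>\<^sup>+s. level_kernel j (x(j := s)) t \<partial>lborel) = level_kernel (Suc j) x t"
proof -
  define v where "v = (\<lambda>i. w * x i - real_of_int \<lfloor>w * t i\<rfloor>)"
  define f where "f u = chi_marginal j (v(j := u))" for u
  have [measurable]: "f \<in> borel_measurable borel"
    unfolding f_def using j by (intro measurable_chi_marginal_comp measurable_restrict) auto
  have "(\<lambda>i. w * (x(j := s)) i - real_of_int \<lfloor>w * t i\<rfloor>) = v(j := - real_of_int \<lfloor>w * t j\<rfloor> + w * s)" for s
    by (auto simp: v_def)
  then have "level_kernel j (x(j := s)) t = ennreal (w ^ (n - j)) * f (- real_of_int \<lfloor>w * t j\<rfloor> + w * s)" for s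
    unfolding level_kernel_def f_def by simp
  then have "(\<integral>\<^sup>+s. level_kernel j (x(j := s)) t \<partial>lborel)
      = ennreal (w ^ (n - j)) * (\<integral>\<^sup>+s. f (- real_of_int \<lfloor>w * t j\<rfloor> + w * s) \<partial>lborel)"
    by (simp add: nn_integral_cmult)
  also have "ennreal w * (\<integral>\<^sup>+s. f (- real_of_int \<lfloor>w * t j\<rfloor> + w * s) \<partial>lborel) = (\<integral>\<^sup>+u. f u \<partial>lborel)"
    using nn_integral_real_affine[of f w "- real_of_int \<lfloor>w * t j\<rfloor>"] w_pos by simp
  then have "ennreal (w ^ (n - j)) * (\<integral>\<^sup>+s. f (- real_of_int \<lfloor>w * t j\<rfloor> + w * s) \<partial>lborel)
      = ennreal (w ^ (n - Suc j)) * (\<integral>\<^sup>+u. f u \<partial>lborel)"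
    using ennreal_power_w_Suc[OF j] by (metis mult.assoc mult.commute)
  finally show ?thesis by (simp add: level_kernel_def f_def v_def)
qed

definition cell_index :: "(nat \<Rightarrow> real) \<Rightarrow> (nat \<Rightarrow> int)" where
  "cell_index t = restrict (\<lambda>i. \<lfloor>w * t i\<rfloor>) {..<n}"

text \<open>The half-open version of \<open>box n w k\<close>; the cells partition the space.\<close>

definition cell :: "(nat \<Rightarrow> int) \<Rightarrow> (nat \<Rightarrow> real) set" where
  "cell k = PiE {..<n} (\<lambda>i. {real_of_int (k i) / w ..< (real_of_int (k i) + 1) / w})"

lemma cell_index_in_Zn: "cell_index t \<in> Zn n"
  by (simp add: cell_index_def Zn_def)

lemma sets_cell[measurable]: "cell k \<in> sets (lebn n)"
  unfolding cell_def lebn_def by (rule sets_PiM_I_finite) auto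

lemma mem_cell_iff:
  assumes t: "t \<in> space (lebn n)" and k: "k \<in> Zn n"
  shows "t \<in> cell k \<longleftrightarrow> cell_index t = k"
proof -
  have iff: "t i \<in> {real_of_int (k i) / w ..< (real_of_int (k i) + 1) / w} \<longleftrightarrow> \<lfloor>w * t i\<rfloor> = k i" for i
  proof -
    have "t i \<in> {real_of_int (k i) / w ..< (real_of_int (k i) + 1) / w}
        \<longleftrightarrow> real_of_int (k i) \<le> w * t i \<and> w * t i < real_of_int (k i) + 1"
      using w_pos by (simp add: field_simps)
    also have "\<dots> \<longleftrightarrow> \<lfloor>w * t i\<rfloor> = k i" by linarith
    finally show ?thesis .
  qed
  have "t \<in> extensional {..<n}" "k \<in> extensional {..<n}"
    using t k by (simp_all add: lebn_def space_PiM PiE_def Zn_def)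
  then show ?thesis
    using iff by (auto simp: cell_def cell_index_def PiE_iff fun_eq_iff extensional_def)
qed

lemma emeasure_cell: "emeasure (lebn n) (cell k) = ennreal ((1/w) ^ n)"
proof -
  have "emeasure (lebn n) (cell k)
      = (\<Prod>i<n. emeasure lborel {real_of_int (k i) / w ..< (real_of_int (k i) + 1) / w})"
    unfolding cell_def lebn_def
    by (rule product_sigma_finite.emeasure_PiM[OF product_sigma_finite_lborel]) auto
  also have "\<dots> = (\<Prod>i<n. ennreal (1/w))"
  proof (intro prod.cong refl)
    fix i
    have "(real_of_int (k i) + 1) / w - real_of_int (k i) / w = 1 / w" using w_pos by (simp add: field_simps)
    moreover have "real_of_int (k i) / w \<le> (real_of_int (k i) + 1) / w"
      using w_pos by (simp add: divide_right_mono)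
    ultimately show "emeasure lborel {real_of_int (k i) / w ..< (real_of_int (k i) + 1) / w} = ennreal (1/w)"
      by simp
  qed
  also have "\<dots> = ennreal ((1/w) ^ n)" using w_pos by (simp add: ennreal_power)
  finally show ?thesis .
qed

lemma nn_integral_cell_decomposition:
  assumes [measurable]: "h \<in> borel_measurable (lebn n)"
  shows "(\<integral>\<^sup>+t. h t * g (cell_index t) \<partial>lebn n)
       = (\<integral>\<^sup>+k. g k * (\<integral>\<^sup>+t. h t * indicator (cell k) t \<partial>lebn n) \<partial>count_space (Zn n))"
proof -
  have countable: "countable (Zn n)"
    unfolding Zn_def by (rule countable_PiE) auto
  have "g (cell_index t) = (\<integral>\<^sup>+k. g k * indicator (cell k) t \<partial>count_space (Zn n))"
    if t: "t \<in> space (lebn n)" for t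
  proof -
    have "(\<integral>\<^sup>+k. g k * indicator (cell k) t \<partial>count_space (Zn n))
        = (\<integral>\<^sup>+k. g k * indicator {cell_index t} k \<partial>count_space (Zn n))"
      by (intro nn_integral_cong) (simp add: indicator_def mem_cell_iff[OF t])
    also have "\<dots> = g (cell_index t)"
      using cell_index_in_Zn[of t] by (simp add: nn_integral_indicator_singleton)
    finally show ?thesis by simp
  qed
  then have "h t * g (cell_index t) = (\<integral>\<^sup>+k. h t * (g k * indicator (cell k) t) \<partial>count_space (Zn n))"
    if "t \<in> space (lebn n)" for t
    using that by (simp add: nn_integral_cmult)
  then have "(\<integral>\<^sup>+t. h t * g (cell_index t) \<partial>lebn n)
      = (\<integral>\<^sup>+t. (\<integral>\<^sup>+k. g k * (h t * indicator (cell k) t) \<partial>count_space (Zn n)) \<partial>lebn n)"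
    by (intro nn_integral_cong) (simp add: ac_simps)
  also have "\<dots> = (\<integral>\<^sup>+k. (\<integral>\<^sup>+t. g k * (h t * indicator (cell k) t) \<partial>lebn n) \<partial>count_space (Zn n))"
    by (rule nn_integral_count_space_nn_integral[OF countable]) measurable
  finally show ?thesis by (simp add: nn_integral_cmult)
qed

lemma nn_integral_cell_index:
  "(\<integral>\<^sup>+t. g (cell_index t) \<partial>lebn n) = ennreal ((1/w) ^ n) * (\<integral>\<^sup>+k. g k \<partial>count_space (Zn n))"
  using nn_integral_cell_decomposition[of "\<lambda>_. 1" g]
  by (simp add: emeasure_cell nn_integral_multc mult.commute)

lemma restrict_eq_vsub_cell_index:
  "restrict (\<lambda>i. w * x i - real_of_int \<lfloor>w * t i\<rfloor>) {..<n} = vsub n (\<lambda>i. w * x i) (cell_index t)"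
  by (auto simp: vsub_def cell_index_def fun_eq_iff)

lemma measurable_vsub_cell_index[measurable]:
  "(\<lambda>t. vsub n (\<lambda>i. w * x i) (cell_index t)) \<in> measurable (lebn n) (lebn n)"
proof -
  have "(\<lambda>t. restrict (\<lambda>i. w * x i - real_of_int \<lfloor>w * t i\<rfloor>) {..<n}) \<in> measurable (lebn n) (lebn n)"
    unfolding lebn_def by (rule measurable_restrict) (simp add: measurable_lborel2)
  then show ?thesis by (simp add: restrict_eq_vsub_cell_index)
qed

lemma level_kernel_zero:
  "level_kernel 0 x t = ennreal (w ^ n) * ennreal (\<bar>chi (vsub n (\<lambda>i. w * x i) (cell_index t))\<bar> / M)"
  by (simp add: level_kernel_def restrict_eq_vsub_cell_index)

lemma level_kernel_mass_zero: "(\<integral>\<^sup>+t. level_kernel 0 x t \<partial>lebn_from 0) \<le> 1"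
proof -
  define g where "g k = ennreal (w ^ n) * ennreal (\<bar>chi (vsub n (\<lambda>i. w * x i) k)\<bar> / M)" for k
  have "(\<integral>\<^sup>+t. level_kernel 0 x t \<partial>lebn_from 0) = (\<integral>\<^sup>+t. g (cell_index t) \<partial>lebn n)"
    by (simp add: level_kernel_zero g_def lebn_def atLeast0LessThan)
  also have "\<dots> = ennreal ((1/w) ^ n) * (\<integral>\<^sup>+k. g k \<partial>count_space (Zn n))"
    by (rule nn_integral_cell_index)
  also have "\<dots> = ennreal (1/M) * (\<integral>\<^sup>+k. ennreal \<bar>chi (vsub n (\<lambda>i. w * x i) k)\<bar> \<partial>count_space (Zn n))"
  proof -
    have "ennreal ((1/w) ^ n) * g k = ennreal (1/M) * ennreal \<bar>chi (vsub n (\<lambda>i. w * x i) k)\<bar>" for k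
      using w_pos M_pos
      by (simp add: g_def power_one_over ennreal_mult[symmetric] del: ennreal_mult')
    then show ?thesis by (simp add: nn_integral_cmult[symmetric])
  qed
  also have "\<dots> \<le> ennreal (1/M) * ennreal M" by (intro mult_left_mono sum_abs_chi_le) simp
  also have "\<dots> = 1" using M_pos by (simp add: ennreal_mult[symmetric] del: ennreal_mult')
  finally show ?thesis .
qed

definition slice_mass :: "nat \<Rightarrow> (nat \<Rightarrow> real) \<Rightarrow> real \<Rightarrow> ennreal" where
  "slice_mass j x \<sigma> = (\<integral>\<^sup>+t. ennreal (w ^ (n - j)) *
      chi_marginal j ((\<lambda>i. w * x i - of_int \<lfloor>w * t i\<rfloor>)(j := \<sigma>)) \<partial>lebn_from (Suc j))"

lemma borel_measurable_slice_integrand: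
  assumes "j < n"
  shows "(\<lambda>(\<sigma>, t). ennreal (w ^ (n - j)) * chi_marginal j ((\<lambda>i. w * x i - of_int \<lfloor>w * t i\<rfloor>)(j := \<sigma>)))
      \<in> borel_measurable (lborel \<Otimes>\<^sub>M lebn_from (Suc j))"
  unfolding case_prod_beta
proof (intro borel_measurable_times_ennreal borel_measurable_const measurable_chi_marginal_comp measurable_restrict)
  fix i assume "i \<in> {j..<n}"
  then show "(\<lambda>z. ((\<lambda>i. w * x i - of_int \<lfloor>w * snd z i\<rfloor>)(j := fst z)) i) \<in> lborel \<Otimes>\<^sub>M lebn_from (Suc j) \<rightarrow>\<^sub>M lborel"
    by (cases "i = j") (auto simp: measurable_lborel2)
qed (use assms in simp)

lemma borel_measurable_slice_mass: "j < n \<Longrightarrow> slice_mass j x \<in> borel_measurable borel"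
  using sigma_finite_measure.borel_measurable_nn_integral[OF sigma_finite_lebn_from borel_measurable_slice_integrand]
  unfolding slice_mass_def by (simp add: measurable_lborel1)

lemma level_kernel_mass_Suc:
  assumes j: "j < n"
  shows "(\<integral>\<^sup>+t. level_kernel (Suc j) x t \<partial>lebn_from (Suc j)) = ennreal (1/w) * (\<integral>\<^sup>+\<sigma>. slice_mass j x \<sigma> \<partial>lborel)"
proof -
  interpret pair_sigma_finite lborel "lebn_from (Suc j)"
    by (intro pair_sigma_finite.intro sigma_finite_lebn_from) (simp add: lborel.sigma_finite_measure_axioms)
  define F where "F \<sigma> t = ennreal (w ^ (n - j)) * chi_marginal j ((\<lambda>i. w * x i - of_int \<lfloor>w * t i\<rfloor>)(j := \<sigma>))"
    for \<sigma> t
  have F: "(\<lambda>(\<sigma>, t). ennreal (1/w) * F \<sigma> t) \<in> borel_measurable (lborel \<Otimes>\<^sub>M lebn_from (Suc j))"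
    using borel_measurable_slice_integrand[OF j] unfolding F_def case_prod_beta by measurable
  have "level_kernel (Suc j) x t = (\<integral>\<^sup>+\<sigma>. ennreal (1/w) * F \<sigma> t \<partial>lborel)"
    if "t \<in> space (lebn_from (Suc j))" for t
  proof -
    have "ennreal (w ^ (n - Suc j)) = ennreal (1/w) * ennreal (w ^ (n - j))"
      using w_pos ennreal_power_w_Suc[OF j] by (simp add: mult.assoc[symmetric] ennreal_mult[symmetric] del: ennreal_mult')
    moreover have "(\<lambda>\<sigma>. chi_marginal j ((\<lambda>i. w * x i - of_int \<lfloor>w * t i\<rfloor>)(j := \<sigma>))) \<in> borel_measurable lborel"
      using j by (intro measurable_chi_marginal_comp measurable_restrict) auto
    ultimately show ?thesis by (simp add: level_kernel_def F_def nn_integral_cmult mult.assoc)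
  qed
  then have "(\<integral>\<^sup>+t. level_kernel (Suc j) x t \<partial>lebn_from (Suc j))
      = (\<integral>\<^sup>+t. (\<integral>\<^sup>+\<sigma>. ennreal (1/w) * F \<sigma> t \<partial>lborel) \<partial>lebn_from (Suc j))"
    by (rule nn_integral_cong)
  also have "\<dots> = (\<integral>\<^sup>+\<sigma>. (\<integral>\<^sup>+t. ennreal (1/w) * F \<sigma> t \<partial>lebn_from (Suc j)) \<partial>lborel)"
    using F by (rule Fubini')
  also have "\<dots> = (\<integral>\<^sup>+\<sigma>. ennreal (1/w) * slice_mass j x \<sigma> \<partial>lborel)"
  proof (rule nn_integral_cong)
    fix \<sigma> :: real
    have "(\<lambda>t. F \<sigma> t) \<in> borel_measurable (lebn_from (Suc j))"
      using measurable_comp[OF measurable_Pair1'[of \<sigma> lborel] borel_measurable_slice_integrand[OF j]]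
      by (simp add: comp_def F_def)
    then show "(\<integral>\<^sup>+t. ennreal (1/w) * F \<sigma> t \<partial>lebn_from (Suc j)) = ennreal (1/w) * slice_mass j x \<sigma>"
      by (simp add: nn_integral_cmult slice_mass_def F_def)
  qed
  also have "\<dots> = ennreal (1/w) * (\<integral>\<^sup>+\<sigma>. slice_mass j x \<sigma> \<partial>lborel)"
    using borel_measurable_slice_mass[OF j] by (simp add: nn_integral_cmult measurable_lborel1)
  finally show ?thesis .
qed

lemma level_kernel_mass_update:
  assumes j: "j < n"
  shows "(\<integral>\<^sup>+t. level_kernel j (x(j := \<sigma> / w)) t \<partial>lebn_from j)
       = ennreal (1/w) * (\<integral>\<^sup>+k. slice_mass j x (\<sigma> - real_of_int k) \<partial>count_space UNIV)"
proof -
  have "level_kernel j (x(j := \<sigma> / w)) \<in> borel_measurable (PiM (insert j {Suc j..<n}) (\<lambda>_. lborel))"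
    using borel_measurable_level_kernel[of j j] j by (simp add: atLeastLessThan_eq_insert_lower)
  then have "(\<integral>\<^sup>+t. level_kernel j (x(j := \<sigma> / w)) t \<partial>lebn_from j)
      = (\<integral>\<^sup>+\<tau>. (\<integral>\<^sup>+t. level_kernel j (x(j := \<sigma> / w)) (t(j := \<tau>)) \<partial>lebn_from (Suc j)) \<partial>lborel)"
    using j by (simp add: atLeastLessThan_eq_insert_lower
        product_sigma_finite.product_nn_integral_insert_rev[OF product_sigma_finite_lborel])
  also have "\<dots> = (\<integral>\<^sup>+\<tau>. slice_mass j x (\<sigma> - real_of_int \<lfloor>w * \<tau>\<rfloor>) \<partial>lborel)"
  proof (intro nn_integral_cong)
    fix \<tau> :: real
    have "(\<lambda>i. w * (x(j := \<sigma> / w)) i - real_of_int \<lfloor>w * (t(j := \<tau>)) i\<rfloor>)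
        = (\<lambda>i. w * x i - real_of_int \<lfloor>w * t i\<rfloor>)(j := \<sigma> - real_of_int \<lfloor>w * \<tau>\<rfloor>)" for t
      using w_pos by (auto simp: fun_eq_iff)
    then show "(\<integral>\<^sup>+t. level_kernel j (x(j := \<sigma> / w)) (t(j := \<tau>)) \<partial>lebn_from (Suc j))
        = slice_mass j x (\<sigma> - real_of_int \<lfloor>w * \<tau>\<rfloor>)"
      by (simp add: level_kernel_def slice_mass_def)
  qed
  also have "\<dots> = ennreal (1/w) * (\<integral>\<^sup>+k. slice_mass j x (\<sigma> - real_of_int k) \<partial>count_space UNIV)"
    by (rule nn_integral_floor_scaled[OF w_pos])
  finally show ?thesis .
qed

lemma level_kernel_mass_Suc_eq_average:
  assumes j: "j < n"
  shows "(\<integral>\<^sup>+t. level_kernel (Suc j) x t \<partial>lebn_from (Suc j))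
       = (\<integral>\<^sup>+\<sigma>. (\<integral>\<^sup>+t. level_kernel j (x(j := \<sigma> / w)) t \<partial>lebn_from j) * indicator {0..<1} \<sigma> \<partial>lborel)"
proof -
  have [measurable]: "slice_mass j x \<in> borel_measurable borel" by (rule borel_measurable_slice_mass[OF j])
  have "(\<integral>\<^sup>+t. level_kernel (Suc j) x t \<partial>lebn_from (Suc j)) = (\<integral>\<^sup>+\<sigma>. ennreal (1/w) * slice_mass j x \<sigma> \<partial>lborel)"
    by (simp add: level_kernel_mass_Suc[OF j] nn_integral_cmult measurable_lborel1)
  also have "\<dots> = (\<integral>\<^sup>+\<sigma>. (\<integral>\<^sup>+k. ennreal (1/w) * slice_mass j x (\<sigma> - real_of_int k) \<partial>count_space UNIV)
      * indicator {0..<1} \<sigma> \<partial>lborel)"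
    by (rule nn_integral_lborel_periodize) simp
  also have "\<dots> = (\<integral>\<^sup>+\<sigma>. (\<integral>\<^sup>+t. level_kernel j (x(j := \<sigma> / w)) t \<partial>lebn_from j) * indicator {0..<1} \<sigma> \<partial>lborel)"
    by (simp add: level_kernel_mass_update[OF j] nn_integral_cmult)
  finally show ?thesis .
qed

lemma level_kernel_mass: "j \<le> n \<Longrightarrow> (\<integral>\<^sup>+t. level_kernel j x t \<partial>lebn_from j) \<le> 1"
proof (induction j arbitrary: x)
  case 0
  show ?case by (rule level_kernel_mass_zero)
next
  case (Suc j)
  then have "(\<integral>\<^sup>+t. level_kernel (Suc j) x t \<partial>lebn_from (Suc j))
      = (\<integral>\<^sup>+\<sigma>. (\<integral>\<^sup>+t. level_kernel j (x(j := \<sigma> / w)) t \<partial>lebn_from j) * indicator {0..<1} \<sigma> \<partial>lborel)"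
    by (intro level_kernel_mass_Suc_eq_average) simp
  also have "\<dots> \<le> (\<integral>\<^sup>+\<sigma>. indicator {0..<1::real} \<sigma> \<partial>lborel)"
    by (intro nn_integral_mono) (use Suc in \<open>auto simp: indicator_def\<close>)
  also have "\<dots> = 1" by simp
  finally show ?case .
qed

lemma nn_integral_level_kernel_update_times:
  assumes j: "j < n" and [measurable]: "G \<in> borel_measurable (lebn_from j)"
  shows "(\<integral>\<^sup>+s. (\<integral>\<^sup>+t. G t * level_kernel j (x(j := s)) t \<partial>lebn_from j) \<partial>lborel)
       = (\<integral>\<^sup>+t. G t * level_kernel (Suc j) x t \<partial>lebn_from j)"
proof -
  interpret pair_sigma_finite lborel "lebn_from j"
    by (intro pair_sigma_finite.intro sigma_finite_lebn_from) (simp add: lborel.sigma_finite_measure_axioms)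
  have K: "(\<lambda>(s, t). level_kernel j (x(j := s)) t) \<in> borel_measurable (lborel \<Otimes>\<^sub>M lebn_from j)"
    using j by (simp add: borel_measurable_level_kernel_update)
  have "(\<lambda>(s, t). G t * level_kernel j (x(j := s)) t) \<in> borel_measurable (lborel \<Otimes>\<^sub>M lebn_from j)"
    using K unfolding case_prod_beta by measurable
  then have "(\<integral>\<^sup>+s. (\<integral>\<^sup>+t. G t * level_kernel j (x(j := s)) t \<partial>lebn_from j) \<partial>lborel)
      = (\<integral>\<^sup>+t. (\<integral>\<^sup>+s. G t * level_kernel j (x(j := s)) t \<partial>lborel) \<partial>lebn_from j)"
    by (rule Fubini'[symmetric])
  also have "\<dots> = (\<integral>\<^sup>+t. G t * level_kernel (Suc j) x t \<partial>lebn_from j)"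
  proof (rule nn_integral_cong)
    fix t assume t: "t \<in> space (lebn_from j)"
    have "(\<lambda>s. level_kernel j (x(j := s)) t) \<in> borel_measurable lborel"
      using measurable_comp[OF measurable_Pair2'[OF t] K] by (simp add: comp_def)
    then show "(\<integral>\<^sup>+s. G t * level_kernel j (x(j := s)) t \<partial>lborel) = G t * level_kernel (Suc j) x t"
      by (simp add: nn_integral_cmult nn_integral_level_kernel_update[OF j])
  qed
  finally show ?thesis .
qed

lemma nn_integral_level_kernel_Suc_times:
  assumes j: "j < n" and [measurable]: "G \<in> borel_measurable (lebn_from j)"
  shows "(\<integral>\<^sup>+t. G t * level_kernel (Suc j) x t \<partial>lebn_from j)
       = (\<integral>\<^sup>+t. (\<integral>\<^sup>+\<tau>. G (t(j := \<tau>)) \<partial>lborel) * level_kernel (Suc j) x t \<partial>lebn_from (Suc j))"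
proof -
  have ins: "{j..<n} = insert j {Suc j..<n}" using j by auto
  have "level_kernel (Suc j) x \<in> borel_measurable (lebn_from j)"
    using j by (simp add: borel_measurable_level_kernel)
  then have "(\<lambda>t. G t * level_kernel (Suc j) x t) \<in> borel_measurable (PiM (insert j {Suc j..<n}) (\<lambda>_. lborel))"
    unfolding ins[symmetric] by measurable
  then have "(\<integral>\<^sup>+t. G t * level_kernel (Suc j) x t \<partial>lebn_from j)
      = (\<integral>\<^sup>+t. (\<integral>\<^sup>+\<tau>. G (t(j := \<tau>)) * level_kernel (Suc j) x (t(j := \<tau>)) \<partial>lborel) \<partial>lebn_from (Suc j))"
    unfolding ins by (subst product_sigma_finite.product_nn_integral_insert[OF product_sigma_finite_lborel]) auto
  also have "\<dots> = (\<integral>\<^sup>+t. (\<integral>\<^sup>+\<tau>. G (t(j := \<tau>)) \<partial>lborel) * level_kernel (Suc j) x t \<partial>lebn_from (Suc j))"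
  proof (rule nn_integral_cong)
    fix t assume t: "t \<in> space (lebn_from (Suc j))"
    have "level_kernel (Suc j) x (t(j := \<tau>)) = level_kernel (Suc j) x t" for \<tau>
      unfolding level_kernel_def by (intro arg_cong2[where f = "(*)"] refl chi_marginal_cong) auto
    moreover have "(\<lambda>\<tau>. t(j := \<tau>)) \<in> measurable lborel (lebn_from j)"
      using measurable_component_update[OF t, of j] by (simp add: ins)
    then have "(\<lambda>\<tau>. G (t(j := \<tau>))) \<in> borel_measurable lborel" by measurable
    ultimately show "(\<integral>\<^sup>+\<tau>. G (t(j := \<tau>)) * level_kernel (Suc j) x (t(j := \<tau>)) \<partial>lborel)
        = (\<integral>\<^sup>+\<tau>. G (t(j := \<tau>)) \<partial>lborel) * level_kernel (Suc j) x t"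
      by (simp add: nn_integral_multc)
  qed
  finally show ?thesis .
qed

lemma modG_le_level_kernel:
  assumes phis: "\<forall>i<n. orlicz (\<Phi> i)" and [measurable]: "F \<in> borel_measurable (lebn n)"
    and base: "\<And>x. ennreal \<bar>g x\<bar> \<le> (\<integral>\<^sup>+t. modG 0 \<Phi> F t * level_kernel 0 x t \<partial>lebn_from 0)"
  shows "j \<le> n \<Longrightarrow> modG j \<Phi> g x \<le> (\<integral>\<^sup>+t. modG j \<Phi> F t * level_kernel j x t \<partial>lebn_from j)"
proof (induction j arbitrary: x)
  case 0
  then show ?case using base by simp
next
  case (Suc j)
  then have j: "j < n" by simp
  have phi: "orlicz (\<Phi> j)" using phis j by simp
  have [measurable]: "phi_ext (\<Phi> j) \<in> borel_measurable borel" "modG j \<Phi> F \<in> borel_measurable (lebn_from j)"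
    using phi borel_measurable_modG[OF phis] j by simp_all
  have "modG (Suc j) \<Phi> g x = (\<integral>\<^sup>+s. phi_ext (\<Phi> j) (modG j \<Phi> g (x(j := s))) \<partial>lborel)" by simp
  also have "\<dots> \<le> (\<integral>\<^sup>+s. phi_ext (\<Phi> j) (\<integral>\<^sup>+t. modG j \<Phi> F t * level_kernel j (x(j := s)) t \<partial>lebn_from j) \<partial>lborel)"
    using j by (intro nn_integral_mono monoD[OF mono_phi_ext[OF phi]] Suc.IH) simp
  also have "\<dots> \<le> (\<integral>\<^sup>+s. (\<integral>\<^sup>+t. phi_ext (\<Phi> j) (modG j \<Phi> F t) * level_kernel j (x(j := s)) t \<partial>lebn_from j) \<partial>lborel)"
    using j by (intro nn_integral_mono orlicz_jensen[OF phi] level_kernel_mass borel_measurable_level_kernel) auto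
  also have "\<dots> = (\<integral>\<^sup>+t. phi_ext (\<Phi> j) (modG j \<Phi> F t) * level_kernel (Suc j) x t \<partial>lebn_from j)"
    using j by (intro nn_integral_level_kernel_update_times) simp_all
  also have "\<dots> = (\<integral>\<^sup>+t. modG (Suc j) \<Phi> F t * level_kernel (Suc j) x t \<partial>lebn_from (Suc j))"
    using j by (simp add: nn_integral_level_kernel_Suc_times)
  finally show ?case .
qed

lemma AE_indicator_box_eq_cell: "AE t in lebn n. (indicator (box n w k) t :: ennreal) = indicator (cell k) t"
proof -
  have "AE t in lebn n. \<forall>i\<in>{..<n}. t i \<noteq> (real_of_int (k i) + 1) / w"
    by (rule AE_finite_allI) (auto intro: AE_lebn_coordinate_neq)
  then show ?thesis
  proof (rule AE_mp, intro AE_I2 impI)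
    fix t assume "\<forall>i\<in>{..<n}. t i \<noteq> (real_of_int (k i) + 1) / w"
    then have "t \<in> box n w k \<longleftrightarrow> t \<in> cell k"
      unfolding box_def cell_def PiE_iff by (auto simp: less_le)
    then show "(indicator (box n w k) t :: ennreal) = indicator (cell k) t" by (simp add: indicator_def)
  qed
qed

lemma abs_kant_le_level_kernel:
  assumes [measurable]: "f \<in> borel_measurable (lebn n)"
  shows "ennreal \<bar>c * kant n chi w f x\<bar> \<le> (\<integral>\<^sup>+t. ennreal \<bar>c * M * f t\<bar> * level_kernel 0 x t \<partial>lebn_from 0)"
proof -
  define b where "b k = ennreal \<bar>chi (vsub n (\<lambda>i. w * x i) k)\<bar>" for k
  have "ennreal \<bar>c * kant n chi w f x\<bar>
      = ennreal \<bar>c\<bar> * ennreal \<bar>\<Sum>\<^sub>\<infinity>k\<in>Zn n. chi (vsub n (\<lambda>i. w * x i) k) * w ^ n * (LINT t:box n w k|lebn n. f t)\<bar>"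
    by (simp add: kant_def abs_mult ennreal_mult)
  also have "\<dots> \<le> ennreal \<bar>c\<bar> * (\<integral>\<^sup>+k. ennreal \<bar>chi (vsub n (\<lambda>i. w * x i) k) * w ^ n * (LINT t:box n w k|lebn n. f t)\<bar>
      \<partial>count_space (Zn n))"
    by (intro mult_left_mono abs_infsum_le_nn_integral) simp
  also have "\<dots> \<le> ennreal \<bar>c\<bar> * (\<integral>\<^sup>+k. ennreal (w ^ n) * (b k * (\<integral>\<^sup>+t. ennreal \<bar>f t\<bar> * indicator (cell k) t \<partial>lebn n))
      \<partial>count_space (Zn n))"
  proof (intro mult_left_mono nn_integral_mono)
    fix k
    have "ennreal \<bar>chi (vsub n (\<lambda>i. w * x i) k) * w ^ n * (LINT t:box n w k|lebn n. f t)\<bar>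
        = ennreal (w ^ n) * (b k * ennreal \<bar>LINT t:box n w k|lebn n. f t\<bar>)"
      using w_pos by (simp add: b_def abs_mult ennreal_mult[symmetric] ac_simps del: ennreal_mult')
    also have "\<dots> \<le> ennreal (w ^ n) * (b k * (\<integral>\<^sup>+t. ennreal \<bar>f t\<bar> * indicator (box n w k) t \<partial>lebn n))"
      by (intro mult_left_mono abs_set_lebesgue_integral_le_nn_integral) auto
    also have "(\<integral>\<^sup>+t. ennreal \<bar>f t\<bar> * indicator (box n w k) t \<partial>lebn n) = (\<integral>\<^sup>+t. ennreal \<bar>f t\<bar> * indicator (cell k) t \<partial>lebn n)"
      using AE_indicator_box_eq_cell[of k] by (intro nn_integral_cong_AE) (auto elim: AE_mp)
    finally show "ennreal \<bar>chi (vsub n (\<lambda>i. w * x i) k) * w ^ n * (LINT t:box n w k|lebn n. f t)\<bar>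
        \<le> ennreal (w ^ n) * (b k * (\<integral>\<^sup>+t. ennreal \<bar>f t\<bar> * indicator (cell k) t \<partial>lebn n))" .
  qed simp
  also have "\<dots> = ennreal \<bar>c\<bar> * (ennreal (w ^ n) * (\<integral>\<^sup>+t. ennreal \<bar>f t\<bar> * b (cell_index t) \<partial>lebn n))"
    by (simp add: nn_integral_cmult nn_integral_cell_decomposition[of "\<lambda>t. ennreal \<bar>f t\<bar>"])
  also have "\<dots> = (\<integral>\<^sup>+t. ennreal \<bar>c\<bar> * ennreal (w ^ n) * (ennreal \<bar>f t\<bar> * b (cell_index t)) \<partial>lebn n)"
    by (simp add: b_def nn_integral_cmult mult.assoc)
  also have "\<dots> = (\<integral>\<^sup>+t. ennreal \<bar>c * M * f t\<bar> * level_kernel 0 x t \<partial>lebn_from 0)"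
  proof -
    have "ennreal \<bar>c\<bar> * ennreal (w ^ n) * (ennreal \<bar>f t\<bar> * b (cell_index t))
        = ennreal \<bar>c * M * f t\<bar> * level_kernel 0 x t" for t
    proof -
      have "\<bar>c\<bar> * w ^ n * (\<bar>f t\<bar> * \<bar>chi (vsub n (\<lambda>i. w * x i) (cell_index t))\<bar>)
          = \<bar>c * M * f t\<bar> * (w ^ n * (\<bar>chi (vsub n (\<lambda>i. w * x i) (cell_index t))\<bar> / M))"
        using M_pos by (simp add: abs_mult field_simps)
      then show ?thesis using M_pos w_pos
        by (simp add: b_def level_kernel_zero ennreal_mult[symmetric] del: ennreal_mult')
    qed
    then show ?thesis by (simp add: lebn_def atLeast0LessThan)
  qed
  finally show ?thesis .
qed

lemma chi_marginal_eq_nn_integral: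
  "j \<le> n \<Longrightarrow> chi_marginal j v = (\<integral>\<^sup>+s. chi_marginal 0 (\<lambda>i. if i < j then s i else v i) \<partial>PiM {..<j} (\<lambda>_. lborel))"
proof (induction j arbitrary: v)
  case 0
  then show ?case by (simp add: PiM_empty)
next
  case (Suc j)
  then have j: "j < n" by simp
  have meas: "(\<lambda>s. chi_marginal 0 (\<lambda>i. if i < Suc j then s i else v i)) \<in> borel_measurable (PiM (insert j {..<j}) (\<lambda>_. lborel))"
  proof (rule measurable_chi_marginal_comp, simp, rule measurable_restrict)
    fix i
    show "(\<lambda>s. if i < Suc j then s i else v i) \<in> PiM (insert j {..<j}) (\<lambda>_. lborel) \<rightarrow>\<^sub>M lborel"
      by (cases "i < Suc j") (auto simp: less_Suc_eq)
  qed
  have "(\<integral>\<^sup>+s. chi_marginal 0 (\<lambda>i. if i < Suc j then s i else v i) \<partial>PiM {..<Suc j} (\<lambda>_. lborel))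
      = (\<integral>\<^sup>+u. (\<integral>\<^sup>+s. chi_marginal 0 (\<lambda>i. if i < Suc j then (s(j := u)) i else v i) \<partial>PiM {..<j} (\<lambda>_. lborel)) \<partial>lborel)"
    unfolding lessThan_Suc
    by (rule product_sigma_finite.product_nn_integral_insert_rev[OF product_sigma_finite_lborel _ _ meas]) auto
  also have "\<dots> = (\<integral>\<^sup>+u. chi_marginal j (v(j := u)) \<partial>lborel)"
  proof (rule nn_integral_cong)
    fix u
    have shift: "(\<lambda>i. if i < Suc j then (s(j := u)) i else v i) = (\<lambda>i. if i < j then s i else (v(j := u)) i)"
      for s :: "nat \<Rightarrow> real"
      by (auto simp: fun_eq_iff)
    show "(\<integral>\<^sup>+s. chi_marginal 0 (\<lambda>i. if i < Suc j then (s(j := u)) i else v i) \<partial>PiM {..<j} (\<lambda>_. lborel))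
        = chi_marginal j (v(j := u))"
      unfolding shift by (rule Suc.IH[symmetric]) (use j in simp)
  qed
  finally show ?case by simp
qed

lemma chi_marginal_full: "chi_marginal n v = ennreal ((LINT u|lebn n. \<bar>chi u\<bar>) / M)"
proof -
  have "chi_marginal n v = (\<integral>\<^sup>+s. ennreal (1/M) * ennreal \<bar>chi s\<bar> \<partial>lebn n)"
    unfolding chi_marginal_eq_nn_integral[OF order_refl] lebn_def
  proof (rule nn_integral_cong)
    fix s :: "nat \<Rightarrow> real" assume "s \<in> space (PiM {..<n} (\<lambda>_. lborel))"
    then have "restrict (\<lambda>i. if i < n then s i else v i) {..<n} = s"
      by (auto simp: space_PiM PiE_def extensional_def fun_eq_iff)
    then show "chi_marginal 0 (\<lambda>i. if i < n then s i else v i) = ennreal (1/M) * ennreal \<bar>chi s\<bar>"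
      using M_pos by (simp add: ennreal_mult[symmetric] del: ennreal_mult')
  qed
  also have "\<dots> = ennreal (1/M) * ennreal (LINT u|lebn n. \<bar>chi u\<bar>)"
    using integrable_chi by (simp add: nn_integral_cmult nn_integral_eq_integral)
  also have "\<dots> = ennreal ((LINT u|lebn n. \<bar>chi u\<bar>) / M)"
    using M_pos by (simp add: ennreal_mult[symmetric] del: ennreal_mult')
  finally show ?thesis .
qed

theorem modular_kant_le:
  assumes phis: "\<forall>j<n. orlicz (\<Phi> j)" and [measurable]: "f \<in> borel_measurable (lebn n)"
  shows "modular n \<Phi> (\<lambda>x. c * kant n chi w f x)
       \<le> ennreal ((LINT u|lebn n. \<bar>chi u\<bar>) / M) * modular n \<Phi> (\<lambda>x. c * M * f x)"
proof -
  define x0 :: "nat \<Rightarrow> real" where "x0 = (\<lambda>_. undefined)"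
  have "modular n \<Phi> (\<lambda>x. c * kant n chi w f x) \<le> (\<integral>\<^sup>+t. modG n \<Phi> (\<lambda>x. c * M * f x) t * level_kernel n x0 t \<partial>lebn_from n)"
    unfolding modular_def x0_def
    by (rule modG_le_level_kernel[OF phis]) (simp_all add: abs_kant_le_level_kernel)
  also have "\<dots> = modG n \<Phi> (\<lambda>x. c * M * f x) x0 * level_kernel n x0 x0"
    by (simp add: PiM_empty nn_integral_count_space_finite x0_def)
  also have "\<dots> = ennreal ((LINT u|lebn n. \<bar>chi u\<bar>) / M) * modular n \<Phi> (\<lambda>x. c * M * f x)"
    by (simp add: level_kernel_def chi_marginal_full modular_def x0_def mult.commute)
  finally show ?thesis .
qed

end

section \<open>The absolute moment of order zero\<close>

lemma sum_abs_chi_le_moment: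
  "(\<integral>\<^sup>+k. ennreal \<bar>chi (vsub n u k)\<bar> \<partial>count_space (Zn n)) \<le> moment n chi 0"
proof -
  define u' where "u' = restrict u {..<n}"
  have u': "u' \<in> Rn n" by (simp add: u'_def Rn_def)
  have "vsub n u k = vsub n u' k" for k by (simp add: vsub_def u'_def fun_eq_iff)
  moreover have "pw (vnorm n v) 0 = 1" for v by (simp add: pw_def vnorm_def)
  ultimately have "(\<integral>\<^sup>+k. ennreal \<bar>chi (vsub n u k)\<bar> \<partial>count_space (Zn n))
      = (\<integral>\<^sup>+k. ennreal (\<bar>chi (vsub n u' k)\<bar> * pw (vnorm n (vsub n u' k)) 0) \<partial>count_space (Zn n))"
    by simp
  also have "\<dots> \<le> moment n chi 0"
    unfolding moment_def using u' by (rule SUP_upper)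
  finally show ?thesis .
qed

lemma one_le_moment:
  assumes "\<forall>u\<in>Rn n. ((\<lambda>k. chi (vsub n u k)) has_sum 1) (Zn n)"
  shows "1 \<le> moment n chi 0"
proof -
  define u0 :: "nat \<Rightarrow> real" where "u0 = restrict (\<lambda>_. 0) {..<n}"
  have "infsum (\<lambda>k. chi (vsub n u0 k)) (Zn n) = 1"
    using assms by (simp add: u0_def Rn_def infsumI)
  then have "1 \<le> (\<integral>\<^sup>+k. ennreal \<bar>chi (vsub n u0 k)\<bar> \<partial>count_space (Zn n))"
    using abs_infsum_le_nn_integral[of "\<lambda>k. chi (vsub n u0 k)" "Zn n"] by simp
  also have "\<dots> \<le> moment n chi 0" by (rule sum_abs_chi_le_moment)
  finally show ?thesis .
qed

text \<open>For \<open>n = 0\<close> the lattice \<open>Zn 0\<close> is a single point, at which \<open>\<chi>\<close> equals \<open>1\<close>.\<close>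

lemma sum_abs_chi_le_moment_power:
  assumes partition: "\<forall>u\<in>Rn n. ((\<lambda>k. chi (vsub n u k)) has_sum 1) (Zn n)"
    and finite: "moment n chi 0 < \<infinity>"
  shows "(\<integral>\<^sup>+k. ennreal \<bar>chi (vsub n u k)\<bar> \<partial>count_space (Zn n)) \<le> ennreal (enn2real (moment n chi 0) ^ n)"
proof (cases "n = 0")
  case True
  define k0 :: "nat \<Rightarrow> int" where "k0 = (\<lambda>_. undefined)"
  have Z: "Zn n = {k0}" using True by (simp add: Zn_def k0_def)
  have vsub_k0: "vsub n v k0 = (\<lambda>_. undefined)" for v using True by (simp add: vsub_def restrict_def)
  moreover have "((\<lambda>k. chi (vsub n (\<lambda>_. undefined) k)) has_sum 1) {k0}"
    using partition Z True by (simp add: Rn_def)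
  ultimately have "chi (\<lambda>_. undefined) = 1" by (simp add: has_sum_finite_iff)
  then show ?thesis using True Z vsub_k0 by (simp add: nn_integral_count_space_finite)
next
  case False
  have "1 \<le> enn2real (moment n chi 0)"
    using enn2real_mono[OF one_le_moment[OF partition]] finite by simp
  then have "enn2real (moment n chi 0) \<le> enn2real (moment n chi 0) ^ n"
    using power_increasing[of 1 n "enn2real (moment n chi 0)"] False by simp
  have "(\<integral>\<^sup>+k. ennreal \<bar>chi (vsub n u k)\<bar> \<partial>count_space (Zn n)) \<le> moment n chi 0"
    by (rule sum_abs_chi_le_moment)
  also have "moment n chi 0 = ennreal (enn2real (moment n chi 0))" using finite by simp
  also have "\<dots> \<le> ennreal (enn2real (moment n chi 0) ^ n)" by (rule ennreal_leI) fact
  finally show ?thesis .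
qed

theorem theorem5p1:
  fixes n :: nat and \<Phi> :: "nat \<Rightarrow> real \<Rightarrow> ennreal" and chi :: "(nat \<Rightarrow> real) \<Rightarrow> real"
    and \<alpha> w lam :: real and f :: "(nat \<Rightarrow> real) \<Rightarrow> real"
  assumes "\<forall>j<n. orlicz (\<Phi> j)"
    and "sampling_kernel n chi \<alpha>"
    and "moment n chi 0 < \<infinity>"
    and "w > 0"
    and "f \<in> orlicz_space n \<Phi>"
    and "lam > 0"
  shows "modular n \<Phi> (\<lambda>x. lam * kant n chi w f x)
         \<le> ennreal ((LINT u|lebn n. \<bar>chi u\<bar>) / (enn2real (moment n chi 0)) ^ n)
           * modular n \<Phi> (\<lambda>x. lam * (enn2real (moment n chi 0)) ^ n * f x)"
proof -
  have integrable: "integrable (lebn n) chi"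
    and partition: "\<forall>u\<in>Rn n. ((\<lambda>k. chi (vsub n u k)) has_sum 1) (Zn n)"
    using assms(2) by (auto simp: sampling_kernel_def)
  have "1 \<le> enn2real (moment n chi 0)"
    using enn2real_mono[OF one_le_moment[OF partition]] assms(3) by simp
  then have "0 < enn2real (moment n chi 0) ^ n" by simp
  then interpret kantorovich_kernel n chi w "enn2real (moment n chi 0) ^ n"
    using assms(4) integrable sum_abs_chi_le_moment_power[OF partition assms(3)] by unfold_locales
  have "f \<in> borel_measurable (lebn n)" using assms(5) by (simp add: orlicz_space_def)
  then show ?thesis by (rule modular_kant_le[OF assms(1)])
qed

end
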